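(* Let $G$ and $H$ be finite abelian groups, written additively, of the same even order $k$, and let $f:G\to H$ be semi-planar. For $a\in G$, $b\in H$ put $S(a,b)=\{t\in G : f(t-a)=f(t)+b\}$. Then for each pair $a\in G$, $b\in H$ with $a\neq 0$, we have $|S(a,b)|=2$ if and only if $$\mathcal{L}(\alpha a, d+b)\cap \mathcal{L}((\alpha+1)a, d)\neq\varnothing \quad\text{for all } d\in H \text{ and all } \alpha\in\mathbb{Z}.$$
   Context: A function $f:G\to H$ between finite abelian groups of the same even order is semi-planar if for every non-identity $a\in G$ and every $y\in H$, the equation $f(x+a)-f(x)=y$ has either $0$ or $2$ solutions $x\in G$. The incidence structure $S(G,H;f)$ has points $(x,y)$ with $x\in G$, $y\in H$, and lines $\mathcal{L}(a,b)$ with $a\in G$, $b\in H$; the point $(x,y)$ is incident with $\mathcal{L}(a,b)$ if and only if $y=f(x-a)+b$. For two lines, $\mathcal{L}(a,b)\cap\mathcal{L}(c,d)$ denotes the set of points incident with both. *)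

theory Defs
  imports Main "HOL-Library.Cardinality"
begin

definition zsmul :: "int \<Rightarrow> 'a::ab_group_add \<Rightarrow> 'a" where
  "zsmul k a = (if 0 \<le> k then (\<Sum>_<nat k. a) else - (\<Sum>_<nat (-k). a))"

definition semi_planar :: "('g::{ab_group_add,finite} \<Rightarrow> 'h::{ab_group_add,finite}) \<Rightarrow> bool" where
  "semi_planar f \<longleftrightarrow> (\<forall>a y. a \<noteq> 0 \<longrightarrow>
      card {x. f (x + a) - f x = y} = 0 \<or> card {x. f (x + a) - f x = y} = 2)"

definition line :: "('g::ab_group_add \<Rightarrow> 'h::ab_group_add) \<Rightarrow> 'g \<Rightarrow> 'h \<Rightarrow> ('g \<times> 'h) set" where
  "line f a b = {(x, y). y = f (x - a) + b}"

definition Sset :: "('g::ab_group_add \<Rightarrow> 'h::ab_group_add) \<Rightarrow> 'g \<Rightarrow> 'h \<Rightarrow> 'g set" where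
  "Sset f a b = {t. f (t - a) = f t + b}"

end

theory Submission
  imports Defs
begin

text \<open>Proof idea: a point on both lines \<open>L(\<alpha>a, d+b)\<close> and \<open>L((\<alpha>+1)a, d)\<close> is, after the shift
  \<open>x \<mapsto> x - \<alpha>a\<close>, exactly an element of \<open>S(a,b)\<close>, so the intersection condition says
  \<open>S(a,b) \<noteq> \<emptyset>\<close>. Since \<open>S(a,b)\<close> is a translate of the solution set of
  \<open>f(x+a) - f(x) = -b\<close>, semi-planarity forces \<open>|S(a,b)| \<in> {0,2}\<close>, and nonemptiness means 2.\<close>

lemma zsmul_add_one: "zsmul (k + 1) a = zsmul k a + (a::'a::ab_group_add)"
proof (cases "k \<ge> 0")
  case True
  then have "nat (k + 1) = Suc (nat k)" by simp
  with True show ?thesis by (simp add: zsmul_def add.commute)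
next
  case negative: False
  show ?thesis
  proof (cases "k = -1")
    case True then show ?thesis by (simp add: zsmul_def)
  next
    case False
    with negative have "nat (-k) = Suc (nat (-(k + 1)))" by simp
    with negative False show ?thesis by (simp add: zsmul_def)
  qed
qed

lemma Sset_eq_image_diff_preimage:
  "Sset f a b = (\<lambda>x. x + a) ` {x. f (x + a) - f x = - b}"
proof (rule set_eqI)
  fix t
  have "t \<in> Sset f a b \<longleftrightarrow> t - a \<in> {x. f (x + a) - f x = - b}"
    by (auto simp: Sset_def algebra_simps)
  also have "\<dots> \<longleftrightarrow> t \<in> (\<lambda>x. x + a) ` {x. f (x + a) - f x = - b}"
    by (force intro: image_eqI[of _ _ "t - a"])
  finally show "t \<in> Sset f a b \<longleftrightarrow> t \<in> (\<lambda>x. x + a) ` {x. f (x + a) - f x = - b}" .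
qed

lemma card_Sset_eq_card_diff_preimage:
  "card (Sset f a b) = card {x. f (x + a) - f x = - b}"
  unfolding Sset_eq_image_diff_preimage by (rule card_image) (simp add: inj_on_def)

lemma semi_planar_card_Sset:
  assumes "semi_planar f" and "a \<noteq> 0"
  shows "card (Sset f a b) = 0 \<or> card (Sset f a b) = 2"
  using assms unfolding semi_planar_def card_Sset_eq_card_diff_preimage by blast

lemma line_inter_nonempty_iff_Sset_nonempty:
  "line f (zsmul \<alpha> a) (d + b) \<inter> line f (zsmul (\<alpha> + 1) a) d \<noteq> {} \<longleftrightarrow> Sset f a b \<noteq> {}"
proof
  assume "line f (zsmul \<alpha> a) (d + b) \<inter> line f (zsmul (\<alpha> + 1) a) d \<noteq> {}"
  then obtain x where x: "f (x - zsmul \<alpha> a) + (d + b) = f (x - zsmul (\<alpha> + 1) a) + d"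
    by (auto simp: line_def)
  have "x - zsmul (\<alpha> + 1) a = (x - zsmul \<alpha> a) - a"
    by (simp add: zsmul_add_one diff_diff_eq)
  with x have "x - zsmul \<alpha> a \<in> Sset f a b"
    by (simp add: Sset_def algebra_simps)
  then show "Sset f a b \<noteq> {}" by blast
next
  assume "Sset f a b \<noteq> {}"
  then obtain t where t: "f (t - a) = f t + b" by (auto simp: Sset_def)
  have shift: "t + zsmul \<alpha> a - zsmul (\<alpha> + 1) a = t - a"
    by (simp add: zsmul_add_one)
  have "(t + zsmul \<alpha> a, f t + (d + b)) \<in>
      line f (zsmul \<alpha> a) (d + b) \<inter> line f (zsmul (\<alpha> + 1) a) d"
    unfolding line_def using t by (simp only: mem_Collect_eq case_prod_conv Int_iff shift)
      (simp add: add_ac)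
  then show "line f (zsmul \<alpha> a) (d + b) \<inter> line f (zsmul (\<alpha> + 1) a) d \<noteq> {}" by blast
qed

theorem lemma3:
  fixes f :: "'g::{ab_group_add,finite} \<Rightarrow> 'h::{ab_group_add,finite}"
    and a :: 'g and b :: 'h
  assumes "CARD('g) = CARD('h)"
    and "even CARD('g)"
    and "semi_planar f"
    and "a \<noteq> 0"
  shows "card (Sset f a b) = 2 \<longleftrightarrow>
    (\<forall>d::'h. \<forall>\<alpha>::int. line f (zsmul \<alpha> a) (d + b) \<inter> line f (zsmul (\<alpha> + 1) a) d \<noteq> {})"
proof -
  have "card (Sset f a b) = 2 \<longleftrightarrow> Sset f a b \<noteq> {}"
    using semi_planar_card_Sset[OF assms(3,4), of b] by auto
  then show ?thesis
    using line_inter_nonempty_iff_Sset_nonempty by blast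
qed

end
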